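(* Let $\sqrt{2} = (1.b_1 b_2 b_3 \cdots)_2$ be the binary expansion of $\sqrt 2$. For integers $n \geq 2$, let $L_n(x) = \left\lfloor \frac{x(2^n - x)}{2^{n-2}} \right\rfloor$ for $x \in X_n = \{1, 2, \dots, 2^n - 1\}$, and call $n$ undesirable if there exists $x \in X_n$ with $L_n(x) = 2^{n-1}$. Then an integer $n \geq 2$ is undesirable if $b_{n-1} b_n = 00$, or $b_{n-1} b_n b_{n+1} b_{n+2} = 0100$, or $b_{n-1} b_n b_{n+1} b_{n+2} b_{n+3} = 01010$. *)

theory Defs
  imports Complex_Main
begin

text \<open>k-th binary digit after the point of sqrt 2 = (1.b1 b2 b3 ...)_2, for k >= 1.\<close>
definition sqrt2_bit :: "nat \<Rightarrow> int" where
  "sqrt2_bit k = \<lfloor>2 ^ k * sqrt 2\<rfloor> mod 2"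

definition L :: "nat \<Rightarrow> int \<Rightarrow> int" where
  "L n x = \<lfloor>real_of_int (x * (2 ^ n - x)) / 2 ^ (n - 2)\<rfloor>"

definition X :: "nat \<Rightarrow> int set" where
  "X n = {1 .. 2 ^ n - 1}"

definition undesirable :: "nat \<Rightarrow> bool" where
  "undesirable n \<longleftrightarrow> (\<exists>x \<in> X n. L n x = 2 ^ (n - 1))"

end

theory Submission
  imports Defs
begin

text \<open>
  Put \<open>n = k + 2\<close>, \<open>q = 2^k\<close> and \<open>y = \<lfloor>q \<surd>2\<rfloor>\<close>. Each of the three bit patterns says that
  the binary expansion of \<open>frac (q \<surd>2)\<close> starts with at most \<open>0.01010\<close>, so \<open>frac (q \<surd>2) < 11/32\<close>.
  Since \<open>2 \<cdot> 11/32 \<cdot> \<surd>2 < 1\<close>, this gives \<open>2q\<^sup>2 - q < y\<^sup>2 \<le> 2q\<^sup>2\<close>. For \<open>x = 2q - y\<close> we have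
  \<open>x (2^n - x) = 4q\<^sup>2 - y\<^sup>2 \<in> [2q\<^sup>2, 2q\<^sup>2 + q)\<close>, and dividing by \<open>2^(n-2) = q\<close> yields
  \<open>L\<^sub>n(x) = 2q = 2^(n-1)\<close>.
\<close>

lemma sqrt2_bit_cases: "sqrt2_bit k = 0 \<or> sqrt2_bit k = 1"
  unfolding sqrt2_bit_def by presburger

lemma floor_double: "\<lfloor>2 * t\<rfloor> = 2 * \<lfloor>t\<rfloor> + \<lfloor>2 * t\<rfloor> mod 2"
  for t :: real
proof -
  have "2 * \<lfloor>t\<rfloor> \<le> \<lfloor>2 * t\<rfloor>"
    by (simp add: le_floor_iff)
  moreover have "\<lfloor>2 * t\<rfloor> < 2 * \<lfloor>t\<rfloor> + 2"
    using of_int_floor_le[of "2 * t"] real_of_int_floor_add_one_gt[of t] by linarith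
  ultimately show ?thesis by presburger
qed

lemma floor_pow2_Suc_mult_sqrt2:
  "\<lfloor>2 ^ Suc k * sqrt 2\<rfloor> = 2 * \<lfloor>2 ^ k * sqrt 2\<rfloor> + sqrt2_bit (Suc k)"
  using floor_double[of "2 ^ k * sqrt 2"] unfolding sqrt2_bit_def by (simp add: mult.assoc)

lemma floor_pow2_add5_mult_sqrt2:
  "\<lfloor>2 ^ (k + 5) * sqrt 2\<rfloor> = 32 * \<lfloor>2 ^ k * sqrt 2\<rfloor>
     + 16 * sqrt2_bit (k + 1) + 8 * sqrt2_bit (k + 2) + 4 * sqrt2_bit (k + 3)
     + 2 * sqrt2_bit (k + 4) + sqrt2_bit (k + 5)"
  using floor_pow2_Suc_mult_sqrt2[of k] floor_pow2_Suc_mult_sqrt2[of "k + 1"]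
    floor_pow2_Suc_mult_sqrt2[of "k + 2"] floor_pow2_Suc_mult_sqrt2[of "k + 3"]
    floor_pow2_Suc_mult_sqrt2[of "k + 4"]
  by (simp add: numeral_eq_Suc)

lemma frac_pow2_mult_sqrt2_less:
  assumes "(sqrt2_bit (k + 1) = 0 \<and> sqrt2_bit (k + 2) = 0)
      \<or> (sqrt2_bit (k + 1) = 0 \<and> sqrt2_bit (k + 2) = 1 \<and> sqrt2_bit (k + 3) = 0 \<and> sqrt2_bit (k + 4) = 0)
      \<or> (sqrt2_bit (k + 1) = 0 \<and> sqrt2_bit (k + 2) = 1 \<and> sqrt2_bit (k + 3) = 0 \<and> sqrt2_bit (k + 4) = 1
          \<and> sqrt2_bit (k + 5) = 0)"
  shows "frac (2 ^ k * sqrt 2) < 11 / 32"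
proof -
  have "\<lfloor>2 ^ (k + 5) * sqrt 2\<rfloor> \<le> 32 * \<lfloor>2 ^ k * sqrt 2\<rfloor> + 10"
    using assms floor_pow2_add5_mult_sqrt2[of k]
      sqrt2_bit_cases[of "k + 3"] sqrt2_bit_cases[of "k + 4"] sqrt2_bit_cases[of "k + 5"]
    by linarith
  moreover have "2 ^ (k + 5) * sqrt 2 < \<lfloor>2 ^ (k + 5) * sqrt 2\<rfloor> + 1"
    by linarith
  moreover have "2 ^ (k + 5) * sqrt 2 = 32 * (2 ^ k * sqrt 2)"
    by (simp add: power_add)
  ultimately have "32 * (2 ^ k * sqrt 2) < 32 * \<lfloor>2 ^ k * sqrt 2\<rfloor> + 11"
    by linarith
  then show ?thesis
    by (simp add: frac_def)
qed

lemma floor_mult_sqrt2_square_bounds: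
  fixes q :: int
  assumes "q > 0" and "frac (q * sqrt 2) < 11 / 32"
  shows "2 * q\<^sup>2 - q < \<lfloor>q * sqrt 2\<rfloor>\<^sup>2" and "\<lfloor>q * sqrt 2\<rfloor>\<^sup>2 \<le> 2 * q\<^sup>2"
proof -
  define s where "s = q * sqrt 2"
  define y where "y = \<lfloor>s\<rfloor>"
  define d where "d = s - y"
  have s_sq: "s\<^sup>2 = 2 * (real_of_int q)\<^sup>2"
    unfolding s_def by (simp add: power_mult_distrib)
  have "s > 0"
    unfolding s_def using assms(1) by simp
  then have "0 \<le> y" "y \<le> s"
    unfolding y_def by simp_all
  then have "real_of_int (y\<^sup>2) \<le> real_of_int (2 * q\<^sup>2)"
    using s_sq power_mono[of y s 2] by simp
  then show "y\<^sup>2 \<le> 2 * q\<^sup>2"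
    by (simp only: of_int_le_iff)
  have sqrt2_less: "sqrt 2 < 16 / 11"
    by (rule real_less_lsqrt) (auto simp: power2_eq_square)
  have "d < 11 / 32"
    using assms(2) unfolding d_def y_def s_def frac_def .
  then have "2 * s * d < 2 * s * (11 / 32)"
    using \<open>s > 0\<close> by simp
  also have "\<dots> < q"
    unfolding s_def using assms(1) sqrt2_less by simp
  finally have "2 * s * d < q" .
  moreover have "(real_of_int y)\<^sup>2 = s\<^sup>2 - 2 * s * d + d\<^sup>2"
    unfolding d_def by (simp add: power2_eq_square algebra_simps)
  ultimately have "2 * (real_of_int q)\<^sup>2 - q < (real_of_int y)\<^sup>2"
    using s_sq zero_le_power2[of d] by linarith
  then have "real_of_int (2 * q\<^sup>2 - q) < real_of_int (y\<^sup>2)"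
    by simp
  then show "2 * q\<^sup>2 - q < y\<^sup>2"
    by (simp only: of_int_less_iff)
qed

lemma undesirable_if_square_near:
  fixes y :: int
  assumes "2 * (2 ^ k)\<^sup>2 - 2 ^ k < y\<^sup>2" and "y\<^sup>2 \<le> 2 * (2 ^ k)\<^sup>2"
  shows "undesirable (k + 2)"
proof -
  define q :: int where "q = 2 ^ k"
  define x where "x = 2 * q - y"
  have "q > 0"
    unfolding q_def by simp
  have near: "2 * q\<^sup>2 - q < y\<^sup>2" "y\<^sup>2 \<le> 2 * q\<^sup>2"
    using assms unfolding q_def by simp_all
  have "q\<^sup>2 > 0"
    using \<open>q > 0\<close> by simp
  then have "y\<^sup>2 < 4 * q\<^sup>2"
    using near(2) by linarith
  then have "\<bar>y\<bar>\<^sup>2 < (2 * q)\<^sup>2"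
    by (simp add: power_mult_distrib)
  then have "\<bar>y\<bar> < 2 * q"
    by (rule power2_less_imp_less) (use \<open>q > 0\<close> in simp)
  moreover have "y \<noteq> 0"
  proof
    assume "y = 0"
    moreover have "q * 1 \<le> q * q"
      using \<open>q > 0\<close> by (intro mult_left_mono) simp_all
    ultimately show False
      using near(1) \<open>q > 0\<close> unfolding power2_eq_square by simp
  qed
  ultimately have "x \<in> X (k + 2)"
    unfolding X_def x_def q_def by (auto simp: power_add)
  have "x * (2 ^ (k + 2) - x) = 4 * q\<^sup>2 - y\<^sup>2"
    unfolding x_def q_def by (simp add: power2_eq_square power_add algebra_simps)
  moreover have "\<lfloor>real_of_int (4 * q\<^sup>2 - y\<^sup>2) / q\<rfloor> = 2 * q"
  proof (rule floor_unique)
    have "2 * q * q \<le> 4 * q\<^sup>2 - y\<^sup>2"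
      using near(2) by (simp add: power2_eq_square)
    then have "real_of_int (2 * q) * q \<le> real_of_int (4 * q\<^sup>2 - y\<^sup>2)"
      by (simp only: of_int_mult[symmetric] of_int_le_iff)
    then show "real_of_int (2 * q) \<le> real_of_int (4 * q\<^sup>2 - y\<^sup>2) / q"
      using \<open>q > 0\<close> by (simp add: pos_le_divide_eq)
    have "4 * q\<^sup>2 - y\<^sup>2 < (2 * q + 1) * q"
      using near(1) by (simp add: power2_eq_square algebra_simps)
    then have "real_of_int (4 * q\<^sup>2 - y\<^sup>2) < real_of_int ((2 * q + 1) * q)"
      by (simp only: of_int_less_iff)
    then have "real_of_int (4 * q\<^sup>2 - y\<^sup>2) < (real_of_int (2 * q) + 1) * q"
      by simp
    then show "real_of_int (4 * q\<^sup>2 - y\<^sup>2) / q < real_of_int (2 * q) + 1"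
      using \<open>q > 0\<close> by (simp add: pos_divide_less_eq)
  qed
  ultimately have "L (k + 2) x = 2 ^ (k + 1)"
    unfolding L_def q_def by simp
  with \<open>x \<in> X (k + 2)\<close> show ?thesis
    unfolding undesirable_def by auto
qed

theorem proposition2p4:
  fixes n :: nat
  assumes "n \<ge> 2"
    and "(sqrt2_bit (n - 1) = 0 \<and> sqrt2_bit n = 0)
      \<or> (sqrt2_bit (n - 1) = 0 \<and> sqrt2_bit n = 1 \<and> sqrt2_bit (n + 1) = 0 \<and> sqrt2_bit (n + 2) = 0)
      \<or> (sqrt2_bit (n - 1) = 0 \<and> sqrt2_bit n = 1 \<and> sqrt2_bit (n + 1) = 0 \<and> sqrt2_bit (n + 2) = 1
          \<and> sqrt2_bit (n + 3) = 0)"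
  shows "undesirable n"
proof -
  obtain k where n: "n = k + 2"
    using assms(1) le_Suc_ex by (metis add.commute)
  have "frac (2 ^ k * sqrt 2) < 11 / 32"
    by (rule frac_pow2_mult_sqrt2_less) (use assms(2) in \<open>simp add: n numeral_eq_Suc\<close>)
  then have "frac (real_of_int (2 ^ k) * sqrt 2) < 11 / 32"
    by simp
  from floor_mult_sqrt2_square_bounds[OF _ this]
  show ?thesis
    unfolding n by (intro undesirable_if_square_near) auto
qed

end
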